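(* For every integer $n\ge0$ and every sequence $s\neq(0)$ of non-negative integers with finitely many nonzero terms, setting $\alpha=[s]$, $$B^n_s=\sum_{J=(j_1,\dots,j_\alpha)\in\mathcal A^0_s}\ \sum_{1\le l_1<l_2<\dots<l_{\alpha-1}<l_\alpha:=n}\ \{l_1\}\prod_{a=2}^{\alpha}\{s^J_{a-1},l_a,j_a\},$$ i.e. in nested form $B^n_s=\sum_{J\in\mathcal A^0_s}\{s^J_{\alpha-1},n,j_\alpha\}\sum_{l_{\alpha-1}=\alpha-1}^{n-1}\{s^J_{\alpha-2},l_{\alpha-1},j_{\alpha-1}\}\cdots\sum_{l_2=2}^{l_3-1}\{s^J_1,l_2,j_2\}\sum_{l_1=1}^{l_2-1}\{l_1\}$ (for $\alpha=1$ the summand is just $\{s^J_0,n,j_1\}$).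
   Context: Fix real numbers $\tilde c_0,A_1,w$ and set $\tilde c_j=\tilde c_0-jA_1$ for all integers $j$. Sequences $s=(s_0,s_1,\dots)$ are integer sequences with finitely many nonzero terms; $(0)$ is the zero sequence; $|s|=\sum_i s_i$, $[s]=\sum_i s_i(i+1)$; $\sigma_0=(1,0,0,\dots)$, and for $i\ge1$, $\sigma_i$ has $-1$ at position $i-1$, $+1$ at position $i$, $0$ elsewhere. For $n\ge0$ and $s$ with non-negative entries, $B^n_s$ is defined by induction on $n+[s]$: $B^0_{(0)}=1$, and otherwise $B^n_s=(1-\delta_{s_0,0})(n+|s|-1)(\tilde c_{n+|s|-2}-w)\sum_{l=0}^{n-1}B^l_{s-\sigma_0}+\sum_{i\ge1}(1-\delta_{s_i,0})(s_{i-1}+1)\sum_{l=0}^{n-1}B^l_{s-\sigma_i}$ (empty sums vanish). For an integer $n$, $\{n\}=n(\tilde c_{n-1}-w)$; for a sequence $s$ and integers $l,a$, $\{s,l,a\}=\{l+|s|\}$ if $a=0$ and $\{s,l,a\}=s_{a-1}$ if $a\neq0$. $\mathcal A$ is the set of finite sequences $J=(j_1,\dots,j_\alpha)$ of non-negative integers with $j_1=0$, $|J|=\alpha$; $s^J_a=\sum_{a'=1}^a\sigma_{j_{a'}}$ ($s^J_0=(0)$), $s^J=s^J_{|J|}$. $\mathcal A^0\subset\mathcal A$ consists of those $J$ for which all entries of all $s^J_a$, $1\le a\le|J|$, are non-negative; $\mathcal A^0_s=\{J\in\mathcal A^0:s^J=s\}$ (such $J$ have $|J|=[s]$). *)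

theory Defs
  imports Complex_Main
begin

text \<open>Sequences are functions nat => int (finite support is assumed where needed).
  Parameters c0 (= tilde c_0), A1, w are explicit real arguments.\<close>

definition ct :: "real \<Rightarrow> real \<Rightarrow> int \<Rightarrow> real" where
  "ct c0 A1 j = c0 - of_int j * A1"

definition br :: "real \<Rightarrow> real \<Rightarrow> real \<Rightarrow> int \<Rightarrow> real" where
  "br c0 A1 w n = of_int n * (ct c0 A1 (n - 1) - w)"

definition sabs :: "(nat \<Rightarrow> int) \<Rightarrow> int" where
  "sabs s = (\<Sum>i\<in>{i. s i \<noteq> 0}. s i)"

definition sweight :: "(nat \<Rightarrow> int) \<Rightarrow> int" where
  "sweight s = (\<Sum>i\<in>{i. s i \<noteq> 0}. s i * (int i + 1))"

fun sigma :: "nat \<Rightarrow> nat \<Rightarrow> int" where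
  "sigma 0 = (\<lambda>k. if k = 0 then 1 else 0)"
| "sigma (Suc i) = (\<lambda>k. if k = Suc i then 1 else if k = i then -1 else 0)"

definition brace3 :: "real \<Rightarrow> real \<Rightarrow> real \<Rightarrow> (nat \<Rightarrow> int) \<Rightarrow> int \<Rightarrow> nat \<Rightarrow> real" where
  "brace3 c0 A1 w s l a = (if a = 0 then br c0 A1 w (l + sabs s) else of_int (s (a - 1)))"

text \<open>s^J = sum of sigma_(j_a); s^J_a = sJ (take a J).\<close>
definition sJ :: "nat list \<Rightarrow> nat \<Rightarrow> int" where
  "sJ J = (\<lambda>k. (\<Sum>x\<leftarrow>J. sigma x k))"

definition calA :: "nat list set" where
  "calA = {J. J \<noteq> [] \<and> hd J = 0}"

definition calA0 :: "nat list set" where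
  "calA0 = {J \<in> calA. \<forall>a\<in>{1..length J}. \<forall>k. sJ (take a J) k \<ge> 0}"

definition calA0s :: "(nat \<Rightarrow> int) \<Rightarrow> nat list set" where
  "calA0s s = {J \<in> calA0. sJ J = s}"

fun Bfun :: "real \<Rightarrow> real \<Rightarrow> real \<Rightarrow> nat \<Rightarrow> (nat \<Rightarrow> int) \<Rightarrow> real" where
  "Bfun c0 A1 w 0 s = (if s = (\<lambda>_. 0) then 1 else 0)"
| "Bfun c0 A1 w (Suc m) s =
     (if s 0 \<noteq> 0 then of_int (int (Suc m) + sabs s - 1) * (ct c0 A1 (int (Suc m) + sabs s - 2) - w)
          * (\<Sum>l\<le>m. Bfun c0 A1 w l (s - sigma 0)) else 0)
     + (\<Sum>i\<in>{i. 1 \<le> i \<and> s i \<noteq> 0}. of_int (s (i - 1) + 1) * (\<Sum>l\<le>m. Bfun c0 A1 w l (s - sigma i)))"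

end

theory Submission
  imports Defs
begin

(* Read J as a walk (0) = s^J_0, s^J_1, ..., s^J_alpha = s in the non-negative orthant, whose
   a-th step adds sigma_(j_a).  The nested sum attached to J splits off its outermost index:
   with F(J, n) the sum for J, F(J @ [i], n) = {s^J, n, i} * sum_(l<n) F(J, l).  On the other
   side, the defining recursion of B^n_s removes a last step sigma_i with s_i > 0, and its
   coefficients are exactly the brace values {s - sigma_i, n, i}.  Since every non-empty walk to
   s arises uniquely from a walk to s - sigma_i with s_i > 0, both sides satisfy the same
   recursion, and the identity follows by strong induction on n. *)

lemma sigma_nonzero_imp_le: "sigma i k \<noteq> 0 \<Longrightarrow> k \<le> i"
  by (cases i) (auto split: if_splits)

lemma sigma_nonneg_if_le: "i \<le> k \<Longrightarrow> 0 \<le> sigma i k"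
  by (cases i) auto

lemma sigma_diag [simp]: "sigma i i = 1"
  by (cases i) auto

lemma finite_support_sigma: "finite {k. sigma i k \<noteq> 0}"
  by (rule finite_subset[of _ "{..i}"]) (auto dest: sigma_nonzero_imp_le)

lemma finite_support_add:
  fixes f g :: "'a \<Rightarrow> 'b::monoid_add"
  shows "finite {k. f k \<noteq> 0} \<Longrightarrow> finite {k. g k \<noteq> 0} \<Longrightarrow> finite {k. f k + g k \<noteq> 0}"
  by (rule finite_subset[of _ "{k. f k \<noteq> 0} \<union> {k. g k \<noteq> 0}"]) auto

lemma finite_support_diff:
  fixes f g :: "'a \<Rightarrow> 'b::group_add"
  shows "finite {k. f k \<noteq> 0} \<Longrightarrow> finite {k. g k \<noteq> 0} \<Longrightarrow> finite {k. (f - g) k \<noteq> 0}"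
  by (rule finite_subset[of _ "{k. f k \<noteq> 0} \<union> {k. g k \<noteq> 0}"]) auto

lemma sum_support_add:
  fixes f g c :: "'a \<Rightarrow> 'b::comm_ring"
  assumes "finite {k. f k \<noteq> 0}" "finite {k. g k \<noteq> 0}"
  shows "(\<Sum>k\<in>{k. f k + g k \<noteq> 0}. (f k + g k) * c k)
       = (\<Sum>k\<in>{k. f k \<noteq> 0}. f k * c k) + (\<Sum>k\<in>{k. g k \<noteq> 0}. g k * c k)"
proof -
  let ?U = "{k. f k \<noteq> 0} \<union> {k. g k \<noteq> 0}"
  have "finite ?U" using assms by simp
  then have on_union: "(\<Sum>k\<in>{k. h k \<noteq> 0}. h k * c k) = (\<Sum>k\<in>?U. h k * c k)"
    if "{k. h k \<noteq> 0} \<subseteq> ?U" for h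
    using that by (intro sum.mono_neutral_left) auto
  have "(\<Sum>k\<in>{k. f k + g k \<noteq> 0}. (f k + g k) * c k) = (\<Sum>k\<in>?U. (f k + g k) * c k)"
    by (rule on_union) auto
  also have "\<dots> = (\<Sum>k\<in>?U. f k * c k) + (\<Sum>k\<in>?U. g k * c k)"
    by (simp add: sum.distrib distrib_right)
  finally show ?thesis
    by (simp only: on_union[of f] on_union[of g] Un_upper1 Un_upper2)
qed

lemma sabs_add:
  "finite {k. f k \<noteq> 0} \<Longrightarrow> finite {k. g k \<noteq> 0} \<Longrightarrow>
   sabs (\<lambda>k. f k + g k) = sabs f + sabs g"
  using sum_support_add[of f g "\<lambda>_. 1"] by (simp add: sabs_def)

lemma sweight_add:
  "finite {k. f k \<noteq> 0} \<Longrightarrow> finite {k. g k \<noteq> 0} \<Longrightarrow>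
   sweight (\<lambda>k. f k + g k) = sweight f + sweight g"
  using sum_support_add[of f g "\<lambda>k. int k + 1"] by (simp add: sweight_def)

lemma sabs_sigma0: "sabs (sigma 0) = 1"
proof -
  have "{k. sigma 0 k \<noteq> 0} = {0}" by auto
  then show ?thesis by (simp add: sabs_def)
qed

lemma sabs_minus_sigma0:
  assumes "finite {k. s k \<noteq> 0}"
  shows "sabs (s - sigma 0) = sabs s - 1"
proof -
  have "sabs s = sabs (\<lambda>k. (s - sigma 0) k + sigma 0 k)" by simp
  also have "\<dots> = sabs (s - sigma 0) + 1"
    using assms by (simp only: sabs_add finite_support_diff finite_support_sigma sabs_sigma0)
  finally show ?thesis by simp
qed

lemma sweight_sigma: "sweight (sigma i) = 1"
proof (cases i)
  case 0
  then have "{k. sigma i k \<noteq> 0} = {0}" by auto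
  then show ?thesis by (simp add: sweight_def 0)
next
  case (Suc j)
  then have "{k. sigma i k \<noteq> 0} = {j, Suc j}" by auto
  then show ?thesis by (simp add: sweight_def Suc)
qed

lemma sJ_Nil [simp]: "sJ [] = (\<lambda>_. 0)"
  by (simp add: sJ_def)

lemma sJ_snoc: "sJ (J @ [i]) = (\<lambda>k. sJ J k + sigma i k)"
  by (simp add: sJ_def)

lemma finite_support_sJ: "finite {k. sJ J k \<noteq> 0}"
  by (induction J rule: rev_induct)
     (simp_all add: sJ_snoc finite_support_add finite_support_sigma)

lemma sweight_sJ: "sweight (sJ J) = int (length J)"
  by (induction J rule: rev_induct)
     (simp_all add: sJ_snoc sweight_add finite_support_sJ finite_support_sigma sweight_sigma,
      simp add: sweight_def)

definition nonneg_walk :: "nat list \<Rightarrow> bool" where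
  "nonneg_walk J \<longleftrightarrow> (\<forall>a\<le>length J. \<forall>k. 0 \<le> sJ (take a J) k)"

definition walks_to :: "(nat \<Rightarrow> int) \<Rightarrow> nat list set" where
  "walks_to s = {J. nonneg_walk J \<and> sJ J = s}"

lemma nonneg_walk_snoc:
  "nonneg_walk (J @ [i]) \<longleftrightarrow> nonneg_walk J \<and> (\<forall>k. 0 \<le> sJ J k + sigma i k)"
proof -
  have "(\<forall>a\<le>Suc (length J). P (take a (J @ [i])))
      \<longleftrightarrow> (\<forall>a\<le>length J. P (take a J)) \<and> P (J @ [i])" for P
    by (auto simp: le_Suc_eq)
  from this[of "\<lambda>L. \<forall>k. 0 \<le> sJ L k"] show ?thesis
    unfolding nonneg_walk_def by (simp add: sJ_snoc)
qed

lemma nonneg_walk_sJ: "nonneg_walk J \<Longrightarrow> 0 \<le> sJ J k"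
  unfolding nonneg_walk_def by (metis order_refl take_all)

lemma nonneg_walk_hd:
  assumes "nonneg_walk J" "J \<noteq> []"
  shows "hd J = 0"
proof -
  have "0 \<le> sJ (take 1 J) k" for k
    using assms unfolding nonneg_walk_def by (simp add: Suc_leI)
  then have "0 \<le> sigma (hd J) k" for k
    using assms(2) by (cases J) (simp_all add: sJ_def)
  from this[of "hd J - 1"] show ?thesis
    by (cases "hd J") auto
qed

lemma calA0s_eq_walks_to:
  assumes "s \<noteq> (\<lambda>_. 0)"
  shows "calA0s s = walks_to s"
proof -
  have "J \<noteq> []" if "sJ J = s" for J
    using that assms by auto
  moreover have "nonneg_walk J \<longleftrightarrow> (\<forall>a\<in>{1..length J}. \<forall>k. 0 \<le> sJ (take a J) k)" for J
    unfolding nonneg_walk_def by (metis atLeastAtMost_iff less_one not_le order.refl sJ_Nil take_0)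
  ultimately show ?thesis
    unfolding calA0s_def calA0_def calA_def walks_to_def by (auto dest: nonneg_walk_hd)
qed

lemma length_walks_to: "J \<in> walks_to s \<Longrightarrow> length J = nat (sweight s)"
  unfolding walks_to_def using sweight_sJ by force

lemma walks_to_zero: "walks_to (\<lambda>_. 0) = {[]}"
proof -
  have "sweight (\<lambda>_. 0) = 0" by (simp add: sweight_def)
  then show ?thesis
    using length_walks_to by (fastforce simp: walks_to_def nonneg_walk_def)
qed

(* No step sigma_(K+1) occurs for the largest step index K, so sJ J K counts the occurrences
   of K.  Hence every step index of a walk to s is bounded by an index in the support of s. *)
lemma sJ_Max_pos:
  assumes "J \<noteq> []"
  shows "0 < sJ J (Max (set J))"
proof -
  let ?K = "Max (set J)"
  have "0 \<le> sigma x ?K" if "x \<in> set J" for x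
    using that by (simp add: sigma_nonneg_if_le)
  moreover have "?K \<in> set J"
    using assms by simp
  then have "sigma ?K ?K \<in> set (map (\<lambda>x. sigma x ?K) J)"
    unfolding set_map by (rule imageI)
  ultimately have "sigma ?K ?K \<le> sJ J ?K"
    unfolding sJ_def by (intro member_le_sum_list) auto
  then show ?thesis by simp
qed

lemma finite_walks_to:
  assumes "finite {k. s k \<noteq> 0}"
  shows "finite (walks_to s)"
proof (rule finite_subset)
  let ?B = "\<Union>k\<in>{k. s k \<noteq> 0}. {..k}"
  show "walks_to s \<subseteq> {J. set J \<subseteq> ?B \<and> length J = nat (sweight s)}"
  proof safe
    fix J j assume J: "J \<in> walks_to s" and j: "j \<in> set J"
    then have "J \<noteq> []" by auto
    then have "0 < s (Max (set J))"
      using J sJ_Max_pos[of J] by (auto simp: walks_to_def)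
    moreover have "j \<le> Max (set J)" using j by simp
    ultimately show "j \<in> ?B" by (intro UN_I[of "Max (set J)"]) auto
  qed (rule length_walks_to)
  show "finite {J. set J \<subseteq> ?B \<and> length J = nat (sweight s)}"
    using assms by (intro finite_lists_length_eq) auto
qed

lemma snoc_in_walks_to:
  "J \<in> walks_to (s - sigma i) \<Longrightarrow> \<forall>k. 0 \<le> s k \<Longrightarrow> J @ [i] \<in> walks_to s"
  by (auto simp: walks_to_def nonneg_walk_snoc sJ_snoc)

lemma walks_to_by_last_step:
  assumes "s \<noteq> (\<lambda>_. 0)" "\<forall>k. 0 \<le> s k"
  shows "walks_to s = (\<Union>i\<in>{i. s i \<noteq> 0}. (\<lambda>J. J @ [i]) ` walks_to (s - sigma i))"
proof (intro equalityI subsetI)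
  fix J assume J: "J \<in> walks_to s"
  with assms(1) have "J \<noteq> []" by (auto simp: walks_to_def)
  then obtain J' i where J': "J = J' @ [i]" by (metis rev_exhaust)
  with J have "J' \<in> walks_to (s - sigma i)"
    by (auto simp: walks_to_def nonneg_walk_snoc sJ_snoc)
  moreover from this have "s i \<noteq> 0"
    using nonneg_walk_sJ[of J' i] by (auto simp: walks_to_def)
  ultimately show "J \<in> (\<Union>i\<in>{i. s i \<noteq> 0}. (\<lambda>J. J @ [i]) ` walks_to (s - sigma i))"
    using J' by blast
qed (use assms(2) snoc_in_walks_to in blast)

lemma sum_walks_to_by_last_step:
  assumes "finite {k. s k \<noteq> 0}" "s \<noteq> (\<lambda>_. 0)" "\<forall>k. 0 \<le> s k"
  shows "(\<Sum>J\<in>walks_to s. f J)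
       = (\<Sum>i\<in>{i. s i \<noteq> 0}. \<Sum>J\<in>walks_to (s - sigma i). f (J @ [i]))"
proof -
  have "finite (walks_to (s - sigma i))" for i
    using finite_walks_to finite_support_diff[OF assms(1) finite_support_sigma] by blast
  then have "(\<Sum>J\<in>walks_to s. f J)
      = (\<Sum>i\<in>{i. s i \<noteq> 0}. \<Sum>J\<in>(\<lambda>J. J @ [i]) ` walks_to (s - sigma i). f J)"
    unfolding walks_to_by_last_step[OF assms(2,3)]
    by (intro sum.UNION_disjoint) (auto simp: assms(1))
  also have "\<dots> = (\<Sum>i\<in>{i. s i \<noteq> 0}. \<Sum>J\<in>walks_to (s - sigma i). f (J @ [i]))"
    by (simp add: sum.reindex inj_on_def)
  finally show ?thesis .
qed

definition chains :: "nat \<Rightarrow> nat \<Rightarrow> nat list set" where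
  "chains k n = {L. length L = k \<and> sorted_wrt (<) L \<and> set L \<subseteq> {1..<n}}"

lemma finite_chains: "finite (chains k n)"
  by (rule finite_subset[of _ "{L. set L \<subseteq> {1..<n} \<and> length L = k}"])
     (auto simp: chains_def intro: finite_lists_length_eq)

lemma chains_0 [simp]: "chains 0 n = {[]}"
  by (auto simp: chains_def)

lemma chains_Suc: "chains (Suc k) n = (\<lambda>(l, L). L @ [l]) ` (SIGMA l:{1..<n}. chains k l)"
proof (intro equalityI subsetI)
  fix L assume L: "L \<in> chains (Suc k) n"
  then have "L \<noteq> []" by (auto simp: chains_def)
  then obtain L' l where "L = L' @ [l]" by (metis rev_exhaust)
  with L show "L \<in> (\<lambda>(l, L). L @ [l]) ` (SIGMA l:{1..<n}. chains k l)"
    by (force simp: chains_def sorted_wrt_append)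
qed (fastforce simp: chains_def sorted_wrt_append)

context
  fixes c0 A1 w :: real
begin

(* M = [l_1, ..., l_alpha], the chain of the theorem with l_alpha = n appended. *)
definition chain_term :: "nat list \<Rightarrow> nat list \<Rightarrow> real" where
  "chain_term J M = br c0 A1 w (int (M ! 0))
     * (\<Prod>a\<in>{2..length J}. brace3 c0 A1 w (sJ (take (a - 1) J)) (int (M ! (a - 1))) (J ! (a - 1)))"

lemma chain_term_snoc:
  assumes "length M = length J" "J \<noteq> []"
  shows "chain_term (J @ [i]) (M @ [n]) = chain_term J M * brace3 c0 A1 w (sJ J) (int n) i"
proof -
  let ?f = "\<lambda>J M a. brace3 c0 A1 w (sJ (take (a - 1) J)) (int (M ! (a - 1))) (J ! (a - 1))"
  have "(\<Prod>a\<in>{2..length J}. ?f (J @ [i]) (M @ [n]) a) = (\<Prod>a\<in>{2..length J}. ?f J M a)"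
    using assms(1) by (intro prod.cong refl) (auto simp: nth_append)
  moreover have "?f (J @ [i]) (M @ [n]) (Suc (length J)) = brace3 c0 A1 w (sJ J) (int n) i"
    using assms(1) by (simp add: nth_append)
  moreover have "(M @ [n]) ! 0 = M ! 0"
    using assms by (simp add: nth_append)
  ultimately show ?thesis
    using assms(2) by (simp add: chain_term_def Suc_le_eq)
qed

(* The empty walk gets the weight B^n_(0); with it, walk_weight_snoc covers the walk [0] too. *)
definition walk_weight :: "nat list \<Rightarrow> nat \<Rightarrow> real" where
  "walk_weight J n = (if J = [] then of_bool (n = 0)
     else (\<Sum>L\<in>chains (length J - 1) n. chain_term J (L @ [n])))"

lemma walk_weight_at_0: "J \<noteq> [] \<Longrightarrow> walk_weight J 0 = 0"
  unfolding walk_weight_def chains_def chain_term_def by (auto simp: br_def intro!: sum.neutral)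

lemma walk_weight_snoc:
  assumes "J \<noteq> [] \<or> i = 0"
  shows "walk_weight (J @ [i]) n = brace3 c0 A1 w (sJ J) (int n) i * (\<Sum>l<n. walk_weight J l)"
proof (cases "J = []")
  case True
  with assms have "i = 0" by simp
  have "(\<Sum>l<n. walk_weight [] l) = of_bool (0 < n)"
    by (simp add: walk_weight_def)
  then show ?thesis
    using True \<open>i = 0\<close> by (auto simp: walk_weight_def chain_term_def brace3_def br_def sabs_def)
next
  case False
  then obtain k where k: "length J = Suc k" by (cases J) auto
  let ?b = "brace3 c0 A1 w (sJ J) (int n) i"
  have snoc: "chain_term (J @ [i]) (L @ [l, n]) = ?b * chain_term J (L @ [l])"
    if "L \<in> chains k l" for L l
    using that k False chain_term_snoc[of "L @ [l]" J i n] by (simp add: chains_def mult.commute)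
  have "walk_weight (J @ [i]) n = (\<Sum>L\<in>chains (Suc k) n. chain_term (J @ [i]) (L @ [n]))"
    using k by (simp add: walk_weight_def)
  also have "\<dots> = (\<Sum>(l, L)\<in>(SIGMA l:{1..<n}. chains k l). chain_term (J @ [i]) (L @ [l, n]))"
    unfolding chains_Suc by (simp add: sum.reindex inj_on_def case_prod_unfold)
  also have "\<dots> = (\<Sum>l\<in>{1..<n}. \<Sum>L\<in>chains k l. chain_term (J @ [i]) (L @ [l, n]))"
    by (rule sum.Sigma[symmetric]) (auto simp: finite_chains)
  also have "\<dots> = (\<Sum>l\<in>{1..<n}. ?b * walk_weight J l)"
    using False k by (auto simp: walk_weight_def sum_distrib_left snoc intro!: sum.cong)
  also have "\<dots> = ?b * (\<Sum>l<n. walk_weight J l)"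
    unfolding sum_distrib_left using False
    by (intro sum.mono_neutral_left) (auto simp: walk_weight_at_0 not_less_eq_eq)
  finally show ?thesis .
qed

lemma Bfun_zero_seq: "Bfun c0 A1 w n (\<lambda>_. 0) = of_bool (n = 0)"
  by (cases n) simp_all

lemma brace3_minus_sigma0:
  assumes "finite {k. s k \<noteq> 0}"
  shows "brace3 c0 A1 w (s - sigma 0) l 0 = of_int (l + sabs s - 1) * (ct c0 A1 (l + sabs s - 2) - w)"
proof -
  have "l + sabs (s - sigma 0) = l + sabs s - 1"
    using sabs_minus_sigma0[OF assms] by simp
  moreover have "l + sabs s - 1 - 1 = l + sabs s - 2" by simp
  ultimately show ?thesis by (simp add: brace3_def br_def)
qed

lemma brace3_minus_sigma_Suc: "brace3 c0 A1 w (s - sigma (Suc j)) l (Suc j) = of_int (s j + 1)"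
  by (simp add: brace3_def)

lemma Bfun_Suc_brace3:
  assumes "finite {i. s i \<noteq> 0}"
  shows "Bfun c0 A1 w (Suc m) s = (\<Sum>i\<in>{i. s i \<noteq> 0}.
           brace3 c0 A1 w (s - sigma i) (int (Suc m)) i * (\<Sum>l\<le>m. Bfun c0 A1 w l (s - sigma i)))"
    (is "_ = (\<Sum>i\<in>_. ?t i)")
proof -
  let ?S0 = "{i. i = 0 \<and> s 0 \<noteq> 0}" and ?S1 = "{i. 1 \<le> i \<and> s i \<noteq> 0}"
  have "{i. s i \<noteq> 0} = ?S0 \<union> ?S1"
    by (auto simp: Suc_le_eq)
  then have "(\<Sum>i\<in>{i. s i \<noteq> 0}. ?t i) = (\<Sum>i\<in>?S0. ?t i) + (\<Sum>i\<in>?S1. ?t i)"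
    using assms by (simp add: sum.union_disjoint disjoint_iff)
  also have "(\<Sum>i\<in>?S0. ?t i) = (if s 0 \<noteq> 0 then ?t 0 else 0)"
    by (cases "s 0 = 0") simp_all
  also have "(\<Sum>i\<in>?S1. ?t i)
      = (\<Sum>i\<in>?S1. of_int (s (i - 1) + 1) * (\<Sum>l\<le>m. Bfun c0 A1 w l (s - sigma i)))"
    by (intro sum.cong refl)
       (auto simp del: sigma.simps simp: brace3_minus_sigma_Suc dest!: Suc_le_D)
  also have "?t 0 = of_int (int (Suc m) + sabs s - 1) * (ct c0 A1 (int (Suc m) + sabs s - 2) - w)
      * (\<Sum>l\<le>m. Bfun c0 A1 w l (s - sigma 0))"
    by (simp only: brace3_minus_sigma0[OF assms])
  finally show ?thesis
    unfolding Bfun.simps by (rule sym)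
qed

lemma nonneg_minus_sigma:
  assumes "\<forall>k. 0 \<le> s k" "s i \<noteq> 0"
  shows "\<forall>k. 0 \<le> (s - sigma i) k"
proof
  fix k
  have "1 \<le> s i" "0 \<le> s k"
    using assms(1)[rule_format, of i] assms(1)[rule_format, of k] assms(2) by linarith+
  then show "0 \<le> (s - sigma i) k"
    by (cases i) auto
qed

lemma Bfun_eq_sum_walk_weight:
  assumes "finite {i. s i \<noteq> 0}" "\<forall>i. 0 \<le> s i"
  shows "Bfun c0 A1 w n s = (\<Sum>J\<in>walks_to s. walk_weight J n)"
  using assms
proof (induction n arbitrary: s rule: less_induct)
  case (less n)
  consider "s = (\<lambda>_. 0)" | "s \<noteq> (\<lambda>_. 0)" "n = 0" | m where "s \<noteq> (\<lambda>_. 0)" "n = Suc m"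
    by (cases n) auto
  then show ?case
  proof cases
    case 1
    then show ?thesis by (simp add: walks_to_zero Bfun_zero_seq walk_weight_def)
  next
    case 2
    then have "J \<noteq> []" if "J \<in> walks_to s" for J
      using that by (auto simp: walks_to_def)
    with 2 show ?thesis by (simp add: walk_weight_at_0)
  next
    case (3 m)
    let ?S = "{i. s i \<noteq> 0}" and ?b = "\<lambda>i. brace3 c0 A1 w (s - sigma i) (int (Suc m)) i"
    have IH: "Bfun c0 A1 w l (s - sigma i) = (\<Sum>J\<in>walks_to (s - sigma i). walk_weight J l)"
      if "i \<in> ?S" "l \<le> m" for i l
    proof -
      have "finite {k. (s - sigma i) k \<noteq> 0}"
        using less.prems(1) finite_support_sigma by (rule finite_support_diff)
      moreover have "\<forall>k. 0 \<le> (s - sigma i) k"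
        using nonneg_minus_sigma[OF less.prems(2)] that(1) by blast
      moreover have "l < n" using 3 that(2) by simp
      ultimately show ?thesis using less.IH by blast
    qed
    have step: "?b i * (\<Sum>l\<le>m. walk_weight J l) = walk_weight (J @ [i]) n"
      if J: "J \<in> walks_to (s - sigma i)" for i J
    proof -
      have "J \<noteq> [] \<or> i = 0"
        using snoc_in_walks_to[OF J] less.prems nonneg_walk_hd[of "J @ [i]"]
        by (auto simp: walks_to_def)
      moreover have "sJ J = s - sigma i" using J by (simp add: walks_to_def)
      ultimately show ?thesis
        using 3 by (simp add: walk_weight_snoc lessThan_Suc_atMost)
    qed
    have "Bfun c0 A1 w n s
        = (\<Sum>i\<in>?S. ?b i * (\<Sum>l\<le>m. \<Sum>J\<in>walks_to (s - sigma i). walk_weight J l))"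
      unfolding 3 Bfun_Suc_brace3[OF less.prems(1)]
      by (intro sum.cong refl arg_cong2[of _ _ _ _ times]) (simp add: IH)
    also have "\<dots> = (\<Sum>i\<in>?S. \<Sum>J\<in>walks_to (s - sigma i). ?b i * (\<Sum>l\<le>m. walk_weight J l))"
      by (simp add: sum.swap[of _ "{..m}"] sum_distrib_left)
    also have "\<dots> = (\<Sum>i\<in>?S. \<Sum>J\<in>walks_to (s - sigma i). walk_weight (J @ [i]) n)"
      by (intro sum.cong refl step)
    also have "\<dots> = (\<Sum>J\<in>walks_to s. walk_weight J n)"
      using less.prems 3 by (simp add: sum_walks_to_by_last_step)
    finally show ?thesis .
  qed
qed

end

theorem mainTheorem7:
  fixes c0 A1 w :: real and n :: nat and s :: "nat \<Rightarrow> int"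
  assumes "finite {i. s i \<noteq> 0}" and "\<forall>i. s i \<ge> 0" and "s \<noteq> (\<lambda>_. 0)"
  shows "Bfun c0 A1 w n s =
    (\<Sum>J\<in>calA0s s.
       \<Sum>L\<in>{L. length L = nat (sweight s) - 1 \<and> sorted_wrt (<) L \<and> set L \<subseteq> {1..<n}}.
         br c0 A1 w (int ((L @ [n]) ! 0))
         * (\<Prod>a\<in>{2..nat (sweight s)}.
              brace3 c0 A1 w (sJ (take (a - 1) J)) (int ((L @ [n]) ! (a - 1))) (J ! (a - 1))))"
proof -
  have "Bfun c0 A1 w n s = (\<Sum>J\<in>walks_to s. walk_weight c0 A1 w J n)"
    using assms(1,2) by (rule Bfun_eq_sum_walk_weight)
  also have "\<dots> = (\<Sum>J\<in>walks_to s.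
      \<Sum>L\<in>chains (nat (sweight s) - 1) n. chain_term c0 A1 w J (L @ [n]))"
    using assms(3) by (intro sum.cong refl) (auto simp: walk_weight_def length_walks_to walks_to_def)
  finally show ?thesis
    using assms(3)
    by (simp add: calA0s_eq_walks_to chains_def chain_term_def length_walks_to cong: sum.cong)
qed

end
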